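(* Let $f\colon\mathbb R\to\mathbb R$ be continuous with $|f(x)|\leqslant a\cosh(bx)$ for all $x$, for some $a>0$, $b\in\mathbb R$. Fix $\lambda>0$, let $P_n = e^{-\lambda}\lambda^n/n!$, and for $k\geqslant1$ let $h_k\colon y\mapsto f(y)/k$. For a compactly supported Borel probability measure $\rho$ on $\mathbb R$ and $x\in\mathbb R$ define $$\sigma^{f,\rho}_x = \sum_{n=0}^\infty P_n\,(h_{n+1})_\star\big(\delta_x*\rho^{*n}\big),\qquad \sigma^{f,\rho} = \sum_{n=0}^\infty P_n\,(h_{n+1})_\star\big(\rho^{*(n+1)}\big)$$ ($(h_k)_\star$ pushforward, $*$ convolution, $\rho^{*0}=\delta_0$), and the (finite) means $\langle\sigma^{f,\rho}_x,y\rangle=\int y\,d\sigma^{f,\rho}_x(y)$, $\langle\sigma^{f,\rho},y\rangle=\int y\,d\sigma^{f,\rho}(y)$. Let $\mathcal L>0$, $\mathcal I=[0,\mathcal L]$, let $\mathbb P^{\mathcal I}$ be the set of Borel probability measures with support in $\mathcal I$, with the topology in which $\rho_n\to\rho$ iff $\int\phi\,d\rho_n\to\int\phi\,d\rho$ for all continuous compactly supported $\phi$, and let $N^{f,\mathcal I}=\{\rho\in\mathbb P^{\mathcal I}:\langle\sigma^{f,\rho},y\rangle=0\}$. Define $$A^f(\rho) = \frac{\langle\sigma^{f,\rho}_x,y\rangle}{\langle\sigma^{f,\rho},y\rangle}\,\rho,$$ the measure with density $x\mapsto\langle\sigma^{f,\rho}_x,y\rangle/\langle\sigma^{f,\rho},y\rangle$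 with respect to $\rho$. Then $A^f$ is continuous on $\mathbb P^{\mathcal I}\setminus N^{f,\mathcal I}$.
   Context: $\delta_a$ is the Dirac measure at $a$; $\cosh$ is the hyperbolic cosine. *)

theory Defs
  imports "HOL-Probability.Probability"
begin

fun conv_pow :: "real measure \<Rightarrow> nat \<Rightarrow> real measure" where
  "conv_pow \<rho> 0 = return borel 0"
| "conv_pow \<rho> (Suc n) = convolution \<rho> (conv_pow \<rho> n)"

definition poisson_w :: "real \<Rightarrow> nat \<Rightarrow> real" where
  "poisson_w lam n = exp (- lam) * lam ^ n / fact n"

definition mix_measure :: "(real \<Rightarrow> real) \<Rightarrow> real \<Rightarrow> (nat \<Rightarrow> real measure) \<Rightarrow> real measure" where
  "mix_measure f lam \<mu> = measure_of UNIV (sets borel)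
     (\<lambda>A. \<Sum>n. ennreal (poisson_w lam n) *
            emeasure (distr (\<mu> n) borel (\<lambda>y. f y / real (Suc n))) A)"

definition sigma_x :: "(real \<Rightarrow> real) \<Rightarrow> real \<Rightarrow> real measure \<Rightarrow> real \<Rightarrow> real measure" where
  "sigma_x f lam \<rho> x = mix_measure f lam (\<lambda>n. convolution (return borel x) (conv_pow \<rho> n))"

definition sigma :: "(real \<Rightarrow> real) \<Rightarrow> real \<Rightarrow> real measure \<Rightarrow> real measure" where
  "sigma f lam \<rho> = mix_measure f lam (\<lambda>n. conv_pow \<rho> (Suc n))"

definition mean :: "real measure \<Rightarrow> real" where
  "mean \<mu> = integral\<^sup>L \<mu> (\<lambda>y. y)"

definition probI :: "real \<Rightarrow> real measure set" where
  "probI L = {\<rho>. prob_space \<rho> \<and> sets \<rho> = sets borel \<and> measure \<rho> {0..L} = 1}"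

definition N_set :: "(real \<Rightarrow> real) \<Rightarrow> real \<Rightarrow> real \<Rightarrow> real measure set" where
  "N_set f lam L = {\<rho> \<in> probI L. mean (sigma f lam \<rho>) = 0}"

definition A_density :: "(real \<Rightarrow> real) \<Rightarrow> real \<Rightarrow> real measure \<Rightarrow> real \<Rightarrow> real" where
  "A_density f lam \<rho> x = mean (sigma_x f lam \<rho> x) / mean (sigma f lam \<rho>)"

definition vague_conv :: "(nat \<Rightarrow> real measure) \<Rightarrow> real measure \<Rightarrow> bool" where
  "vague_conv \<mu>s \<mu> \<longleftrightarrow> (\<forall>\<phi>::real \<Rightarrow> real. continuous_on UNIV \<phi> \<and> compact (closure {x. \<phi> x \<noteq> 0}) \<longrightarrow>
      (\<lambda>n. integral\<^sup>L (\<mu>s n) \<phi>) \<longlonglongrightarrow> integral\<^sup>L \<mu> \<phi>)"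

text \<open>Same convergence for the (possibly signed) measures A^f(rho_n) = D_n rho_n.\<close>
definition vague_conv_dens :: "(nat \<Rightarrow> real measure) \<Rightarrow> (nat \<Rightarrow> real \<Rightarrow> real) \<Rightarrow> real measure \<Rightarrow> (real \<Rightarrow> real) \<Rightarrow> bool" where
  "vague_conv_dens \<mu>s Ds \<mu> D \<longleftrightarrow> (\<forall>\<phi>::real \<Rightarrow> real. continuous_on UNIV \<phi> \<and> compact (closure {x. \<phi> x \<noteq> 0}) \<longrightarrow>
      (\<lambda>n. integral\<^sup>L (\<mu>s n) (\<lambda>x. \<phi> x * Ds n x)) \<longlonglongrightarrow> integral\<^sup>L \<mu> (\<lambda>x. \<phi> x * D x))"

end

theory Submission
  imports Defs
begin

(* Both means are Poisson series: writing g_k(x) for the integral of f(x + s) against the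
   k-th convolution power of rho, one has <sigma_x, y> = sum_k P_k/(k+1) g_k(x) and
   <sigma, y> = sum_k P_k/(k+1) g_(k+1)(0). The growth bound on f gives
   |g_k(x)| <= a exp(|b||x|) exp(k|b|L), so both series are dominated by a convergent Poisson
   series and, by Tannery's theorem, it suffices that each g_k(x) depends continuously on
   (rho, x). This follows by induction on k from g_(k+1)(x) = integral of g_k(x + t) d rho(t):
   for measures supported in [0, L] vague convergence is weak convergence, and then integrals
   of uniformly bounded, continuously convergent integrands converge. *)

section \<open>Countable mixtures of measures\<close>

definition mixture_measure :: "'a measure \<Rightarrow> (nat \<Rightarrow> 'a measure) \<Rightarrow> (nat \<Rightarrow> ennreal) \<Rightarrow> 'a measure" where
  "mixture_measure N M w = measure_of (space N) (sets N) (\<lambda>A. \<Sum>n. w n * emeasure (M n) A)"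

lemma sets_mixture_measure [simp, measurable_cong]: "sets (mixture_measure N M w) = sets N"
  by (simp add: mixture_measure_def sets.space_closed)

lemma space_mixture_measure [simp]: "space (mixture_measure N M w) = space N"
  using sets_eq_imp_space_eq[OF sets_mixture_measure] .

lemma suminf_ennreal_swap:
  fixes g :: "nat \<Rightarrow> nat \<Rightarrow> ennreal"
  shows "(\<Sum>i. \<Sum>n. g n i) = (\<Sum>n. \<Sum>i. g n i)"
  using nn_integral_suminf[of "\<lambda>i n. g n i" "count_space UNIV"]
  by (simp add: nn_integral_count_space_nat)

lemma emeasure_mixture_measure:
  assumes sets_M: "\<And>n. sets (M n) = sets N" and A: "A \<in> sets N"
  shows "emeasure (mixture_measure N M w) A = (\<Sum>n. w n * emeasure (M n) A)"
  unfolding mixture_measure_def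
proof (rule emeasure_measure_of_sigma[OF sets.sigma_algebra_axioms _ _ A])
  show "positive (sets N) (\<lambda>A. \<Sum>n. w n * emeasure (M n) A)"
    by (simp add: positive_def)
  show "countably_additive (sets N) (\<lambda>A. \<Sum>n. w n * emeasure (M n) A)"
  proof (rule countably_additiveI)
    fix B :: "nat \<Rightarrow> 'a set"
    assume B: "range B \<subseteq> sets N" "disjoint_family B"
    have "(\<Sum>i. \<Sum>n. w n * emeasure (M n) (B i)) = (\<Sum>n. \<Sum>i. w n * emeasure (M n) (B i))"
      by (rule suminf_ennreal_swap)
    also have "\<dots> = (\<Sum>n. w n * emeasure (M n) (\<Union>i. B i))"
      using B by (simp add: suminf_emeasure sets_M)
    finally show "(\<Sum>i. \<Sum>n. w n * emeasure (M n) (B i)) = (\<Sum>n. w n * emeasure (M n) (\<Union>i. B i))" .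
  qed
qed

lemma nn_integral_mixture_measure:
  assumes sets_M: "\<And>n. sets (M n) = sets N" and u: "u \<in> borel_measurable N"
  shows "(\<integral>\<^sup>+x. u x \<partial>mixture_measure N M w) = (\<Sum>n. w n * (\<integral>\<^sup>+x. u x \<partial>M n))"
  using u
proof (induction rule: borel_measurable_induct)
  case (cong f g)
  have "integral\<^sup>N K f = integral\<^sup>N K g" if "space K = space N" for K
    using cong(3) that by (intro nn_integral_cong) simp
  with cong(4) show ?case by (simp add: sets_eq_imp_space_eq[OF sets_M])
next
  case (set A)
  then show ?case by (simp add: emeasure_mixture_measure sets_M)
next
  case (mult u c)
  then show ?case
    by (simp add: nn_integral_cmult measurable_cong_sets[OF sets_M refl] mult.left_commute)
next
  case (add u v)
  then show ?case
    by (simp add: nn_integral_add measurable_cong_sets[OF sets_M refl] distrib_left suminf_add[symmetric])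
next
  case (seq U)
  have U_M: "U i \<in> borel_measurable (M n)" for n i
    using seq by (simp add: measurable_cong_sets[OF sets_M refl])
  have inc_nn: "incseq (\<lambda>i. w n * (\<integral>\<^sup>+x. U i x \<partial>M n))" for n
    using seq by (auto intro!: mult_left_mono nn_integral_mono simp: incseq_def le_fun_def)
  have "(\<integral>\<^sup>+x. (SUP i. U i) x \<partial>mixture_measure N M w) = (SUP i. \<Sum>n. w n * (\<integral>\<^sup>+x. U i x \<partial>M n))"
    using nn_integral_monotone_convergence_SUP[of U "mixture_measure N M w"] seq
    by (simp add: image_comp)
  also have "\<dots> = (\<Sum>n. SUP i. w n * (\<integral>\<^sup>+x. U i x \<partial>M n))"
    using inc_nn by (rule ennreal_suminf_SUP_eq[symmetric])
  also have "\<dots> = (\<Sum>n. w n * (\<integral>\<^sup>+x. (SUP i. U i) x \<partial>M n))"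
    using nn_integral_monotone_convergence_SUP[OF seq(3) U_M]
    by (simp add: SUP_mult_left_ennreal image_comp)
  finally show ?case .
qed

lemma has_bochner_integral_mixture_measure_nonneg:
  fixes u :: "'a \<Rightarrow> real"
  assumes sets_M: "\<And>n. sets (M n) = sets N" and w: "\<And>n. 0 \<le> w n"
    and u: "u \<in> borel_measurable N" "\<And>x. 0 \<le> u x" and int: "\<And>n. integrable (M n) u"
    and summ: "summable (\<lambda>n. w n * integral\<^sup>L (M n) u)"
  shows "has_bochner_integral (mixture_measure N M (\<lambda>n. ennreal (w n))) u
           (\<Sum>n. w n * integral\<^sup>L (M n) u)"
proof (rule has_bochner_integral_nn_integral)
  have terms_nonneg: "0 \<le> w n * integral\<^sup>L (M n) u" for n
    using w u(2) by simp
  show "0 \<le> (\<Sum>n. w n * integral\<^sup>L (M n) u)"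
    using summ terms_nonneg by (rule suminf_nonneg)
  have "(\<integral>\<^sup>+x. ennreal (u x) \<partial>mixture_measure N M (\<lambda>n. ennreal (w n)))
      = (\<Sum>n. ennreal (w n) * ennreal (integral\<^sup>L (M n) u))"
    using sets_M u int by (simp add: nn_integral_mixture_measure nn_integral_eq_integral)
  also have "\<dots> = (\<Sum>n. ennreal (w n * integral\<^sup>L (M n) u))"
    using w u(2) by (simp add: ennreal_mult)
  also have "\<dots> = ennreal (\<Sum>n. w n * integral\<^sup>L (M n) u)"
    using terms_nonneg summ by (rule suminf_ennreal2)
  finally show "(\<integral>\<^sup>+x. ennreal (u x) \<partial>mixture_measure N M (\<lambda>n. ennreal (w n)))
      = ennreal (\<Sum>n. w n * integral\<^sup>L (M n) u)" .
qed (use u in auto)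

lemma integral_mixture_measure:
  fixes u :: "'a \<Rightarrow> real"
  assumes sets_M: "\<And>n. sets (M n) = sets N" and w: "\<And>n. 0 \<le> w n"
    and u[measurable]: "u \<in> borel_measurable N" and int: "\<And>n. integrable (M n) u"
    and summ: "summable (\<lambda>n. w n * (\<integral>x. \<bar>u x\<bar> \<partial>M n))"
  shows "integral\<^sup>L (mixture_measure N M (\<lambda>n. ennreal (w n))) u = (\<Sum>n. w n * integral\<^sup>L (M n) u)"
proof -
  let ?mix = "mixture_measure N M (\<lambda>n. ennreal (w n))"
  have nonneg_part: "has_bochner_integral ?mix v (\<Sum>n. w n * integral\<^sup>L (M n) v)"
     "summable (\<lambda>n. w n * integral\<^sup>L (M n) v)"
     "\<And>n. integrable (M n) v"
    if v: "v \<in> borel_measurable N" "\<And>x. 0 \<le> v x" "\<And>x. v x \<le> \<bar>u x\<bar>" for v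
  proof -
    show int_v: "integrable (M n) v" for n
    proof (rule Bochner_Integration.integrable_bound[OF integrable_abs[OF int]])
      show "v \<in> borel_measurable (M n)"
        using v(1) by (simp add: measurable_cong_sets[OF sets_M refl])
      show "AE x in M n. norm (v x) \<le> norm \<bar>u x\<bar>"
        using v(2,3) by simp
    qed
    have "0 \<le> w n * integral\<^sup>L (M n) v" "w n * integral\<^sup>L (M n) v \<le> w n * (\<integral>x. \<bar>u x\<bar> \<partial>M n)" for n
      using w v int_v int by (auto intro!: mult_left_mono integral_mono integral_nonneg)
    then show summ_v: "summable (\<lambda>n. w n * integral\<^sup>L (M n) v)"
      by (intro summable_comparison_test[OF _ summ]) auto
    show "has_bochner_integral ?mix v (\<Sum>n. w n * integral\<^sup>L (M n) v)"
      by (rule has_bochner_integral_mixture_measure_nonneg[OF sets_M w v(1,2) int_v summ_v])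
  qed
  have meas: "(\<lambda>x. max 0 (u x)) \<in> borel_measurable N" "(\<lambda>x. max 0 (- u x)) \<in> borel_measurable N"
    by measurable
  have le: "max 0 (u x) \<le> \<bar>u x\<bar>" "max 0 (- u x) \<le> \<bar>u x\<bar>" for x
    by auto
  note pos = nonneg_part[OF meas(1) max.cobounded1 le(1)] and neg = nonneg_part[OF meas(2) max.cobounded1 le(2)]
  have split_u: "(\<lambda>x. max 0 (u x) - max 0 (- u x)) = u"
    by (auto simp: fun_eq_iff)
  have "has_bochner_integral ?mix (\<lambda>x. max 0 (u x) - max 0 (- u x))
          ((\<Sum>n. w n * (\<integral>x. max 0 (u x) \<partial>M n)) - (\<Sum>n. w n * (\<integral>x. max 0 (- u x) \<partial>M n)))"
    using pos(1) neg(1) by (rule has_bochner_integral_diff)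
  also have "(\<Sum>n. w n * (\<integral>x. max 0 (u x) \<partial>M n)) - (\<Sum>n. w n * (\<integral>x. max 0 (- u x) \<partial>M n))
      = (\<Sum>n. w n * ((\<integral>x. max 0 (u x) \<partial>M n) - (\<integral>x. max 0 (- u x) \<partial>M n)))"
    using pos(2) neg(2) by (subst suminf_diff) (simp_all add: right_diff_distrib)
  also have "\<dots> = (\<Sum>n. w n * integral\<^sup>L (M n) u)"
  proof (intro suminf_cong arg_cong2[where f = "(*)"] refl)
    fix n
    have "(\<integral>x. max 0 (u x) \<partial>M n) - (\<integral>x. max 0 (- u x) \<partial>M n)
        = (\<integral>x. max 0 (u x) - max 0 (- u x) \<partial>M n)"
      using pos(3) neg(3) by (rule Bochner_Integration.integral_diff[symmetric])
    then show "(\<integral>x. max 0 (u x) \<partial>M n) - (\<integral>x. max 0 (- u x) \<partial>M n) = integral\<^sup>L (M n) u"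
      by (simp only: split_u)
  qed
  finally show ?thesis
    unfolding split_u by (rule has_bochner_integral_integral_eq)
qed

lemma cosh_le_exp_abs: "cosh x \<le> exp \<bar>x :: real\<bar>"
proof -
  have "exp x \<le> exp \<bar>x\<bar>" "exp (- x) \<le> exp \<bar>x\<bar>"
    by simp_all
  then have "exp x + exp (- x) \<le> 2 * exp \<bar>x\<bar>"
    by linarith
  then show ?thesis
    by (simp add: cosh_field_def)
qed

lemma continuous_on_abs_bounded_atLeastAtMost:
  fixes h :: "real \<Rightarrow> real"
  assumes "continuous_on {a..b} h"
  obtains K where "\<And>x. x \<in> {a..b} \<Longrightarrow> \<bar>h x\<bar> \<le> K"
proof -
  have "bounded (h ` {a..b})"
    using assms by (intro compact_imp_bounded compact_continuous_image) auto
  then obtain K where "\<forall>y\<in>h ` {a..b}. norm y \<le> K"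
    by (auto simp: bounded_iff)
  then have "\<And>x. x \<in> {a..b} \<Longrightarrow> \<bar>h x\<bar> \<le> K"
    by auto
  then show ?thesis
    by (rule that)
qed

lemma integrable_continuous_AE_atLeastAtMost:
  fixes h :: "real \<Rightarrow> real"
  assumes "finite_measure M" "sets M = sets borel" "AE x in M. x \<in> {a..b}" "continuous_on UNIV h"
  shows "integrable M h"
proof -
  obtain K where K: "\<And>x. x \<in> {a..b} \<Longrightarrow> \<bar>h x\<bar> \<le> K"
    using continuous_on_abs_bounded_atLeastAtMost[OF continuous_on_subset[OF assms(4) subset_UNIV]]
    by blast
  show ?thesis
  proof (rule finite_measure.integrable_const_bound[OF assms(1)])
    show "AE x in M. norm (h x) \<le> K"
      using assms(3) by eventually_elim (simp add: K)
    show "h \<in> borel_measurable M"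
      unfolding measurable_cong_sets[OF assms(2) refl]
      using assms(4) by (rule borel_measurable_continuous_onI)
  qed
qed

lemma (in prob_space) abs_integral_le_AE_bound:
  fixes g :: "'a \<Rightarrow> real"
  assumes bound: "AE x in M. \<bar>g x\<bar> \<le> B"
  shows "\<bar>integral\<^sup>L M g\<bar> \<le> B"
proof (cases "integrable M g")
  case True
  have "\<bar>integral\<^sup>L M g\<bar> \<le> (\<integral>x. \<bar>g x\<bar> \<partial>M)"
    by (rule integral_abs_bound)
  also have "\<dots> \<le> B"
    using True bound by (intro integral_le_const) auto
  finally show ?thesis .
next
  case False
  have "AE x in M. 0 \<le> B"
    using bound by eventually_elim (rule order_trans[OF abs_ge_zero])
  with False show ?thesis
    by (simp add: not_integrable_integral_eq)
qed

lemma tendsto_suminf_dominated: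
  fixes u :: "nat \<Rightarrow> nat \<Rightarrow> real"
  assumes "\<And>k. (\<lambda>n. u k n) \<longlonglongrightarrow> v k" and "\<And>k n. \<bar>u k n\<bar> \<le> M k" and "summable M"
  shows "(\<lambda>n. \<Sum>k. u k n) \<longlonglongrightarrow> (\<Sum>k. v k)"
  using tannerys_theorem[of u v sequentially M] assms by (simp add: always_eventually)

lemma poisson_w_nonneg: "0 \<le> lam \<Longrightarrow> 0 \<le> poisson_w lam n"
  by (simp add: poisson_w_def)

lemma summable_poisson_w_power: "summable (\<lambda>n. poisson_w lam n * (c * r ^ n))"
proof -
  have "summable (\<lambda>n. c * exp (- lam) * (inverse (fact n) * (lam * r) ^ n))"
    by (intro summable_mult summable_exp)
  then show ?thesis
    by (simp add: poisson_w_def power_mult_distrib field_simps)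
qed

lemma abs_divide_Suc_le: "\<bar>x / real (Suc n)\<bar> \<le> \<bar>x :: real\<bar>"
  by (simp add: abs_divide divide_le_eq field_simps)

lemma abs_poisson_w_divide_mult_le:
  assumes "0 \<le> lam" and "\<bar>t\<bar> \<le> B"
  shows "\<bar>poisson_w lam k / real (Suc k) * t\<bar> \<le> poisson_w lam k * B"
proof -
  have "\<bar>poisson_w lam k / real (Suc k) * t\<bar> = poisson_w lam k * \<bar>t / real (Suc k)\<bar>"
    using poisson_w_nonneg[OF assms(1)] by (simp add: abs_mult)
  also have "\<dots> \<le> poisson_w lam k * B"
    using poisson_w_nonneg[OF assms(1)] order_trans[OF abs_divide_Suc_le assms(2)]
    by (rule mult_left_mono[rotated])
  finally show ?thesis .
qed

lemma mix_measure_eq_mixture_measure: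
  "mix_measure f lam \<mu> = mixture_measure borel (\<lambda>n. distr (\<mu> n) borel (\<lambda>y. f y / real (Suc n)))
     (\<lambda>n. ennreal (poisson_w lam n))"
  by (simp add: mix_measure_def mixture_measure_def)

lemma mean_mix_measure:
  assumes lam: "0 \<le> lam" and prob: "\<And>n. prob_space (\<mu> n)" and sets_\<mu>: "\<And>n. sets (\<mu> n) = sets borel"
    and f[measurable]: "f \<in> borel_measurable borel"
    and bound: "\<And>n. AE y in \<mu> n. \<bar>f y\<bar> \<le> B n"
    and summ: "summable (\<lambda>n. poisson_w lam n * B n)"
  shows "mean (mix_measure f lam \<mu>) = (\<Sum>n. poisson_w lam n / real (Suc n) * (\<integral>y. f y \<partial>\<mu> n))"
proof -
  define h where "h n y = f y / real (Suc n)" for n y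
  have h_borel[measurable]: "h n \<in> borel_measurable borel" for n
    unfolding h_def by measurable
  have h_\<mu>[measurable]: "h n \<in> borel_measurable (\<mu> n)" for n
    using h_borel by (simp add: measurable_cong_sets[OF sets_\<mu> refl])
  have h_bound: "AE y in \<mu> n. \<bar>h n y\<bar> \<le> B n" for n
    using bound[of n] unfolding h_def by eventually_elim (rule order_trans[OF abs_divide_Suc_le])
  have int_h: "integrable (\<mu> n) (h n)" for n
    using prob h_bound by (intro finite_measure.integrable_const_bound[where B = "B n"])
      (auto simp: prob_space.finite_measure)
  have distr_integral: "(\<integral>x. g x \<partial>distr (\<mu> n) borel (h n)) = (\<integral>y. g (h n y) \<partial>\<mu> n)"
    if [measurable]: "g \<in> borel_measurable borel" for g :: "real \<Rightarrow> real" and n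
    by (rule integral_distr) simp_all
  have abs_le: "\<bar>\<integral>x. \<bar>x\<bar> \<partial>distr (\<mu> n) borel (h n)\<bar> \<le> B n" for n
    using prob_space.abs_integral_le_AE_bound[OF prob[of n], where g = "\<lambda>y. \<bar>h n y\<bar>"] h_bound
    by (simp add: distr_integral)
  have "mean (mix_measure f lam \<mu>) = (\<Sum>n. poisson_w lam n * (\<integral>x. x \<partial>distr (\<mu> n) borel (h n)))"
    unfolding mean_def mix_measure_eq_mixture_measure h_def[symmetric]
  proof (rule integral_mixture_measure)
    show "integrable (distr (\<mu> n) borel (h n)) (\<lambda>x. x)" for n
      using int_h by (subst integrable_distr_eq) simp_all
    show "summable (\<lambda>n. poisson_w lam n * (\<integral>x. \<bar>x\<bar> \<partial>distr (\<mu> n) borel (h n)))"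
      using abs_le poisson_w_nonneg[OF lam]
      by (intro summable_comparison_test'[OF summ]) (simp add: abs_mult mult_left_mono)
  qed (simp_all add: poisson_w_nonneg[OF lam])
  then show ?thesis
    by (simp add: distr_integral h_def)
qed

section \<open>Convolution powers of measures supported in [0, L]\<close>

lemma prob_space_convolution:
  assumes "prob_space M" "prob_space N" and [measurable_cong]: "sets M = sets borel" "sets N = sets borel"
  shows "prob_space (convolution M N)"
proof -
  interpret M: prob_space M by fact
  interpret N: prob_space N by fact
  interpret pair_prob_space M N ..
  show ?thesis
    unfolding convolution_def by (rule prob_space_distr) simp
qed

lemma AE_convolution_atLeastAtMost:
  fixes M N :: "real measure"
  assumes "prob_space M" "prob_space N" and [measurable_cong]: "sets M = sets borel" "sets N = sets borel"
    and AE_M: "AE x in M. x \<in> {a..b}" and AE_N: "AE y in N. y \<in> {c..d}"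
  shows "AE z in convolution M N. z \<in> {a + c..b + d}"
proof -
  interpret M: prob_space M by fact
  interpret N: prob_space N by fact
  interpret pair_prob_space M N ..
  have "AE p in M \<Otimes>\<^sub>M N. fst p + snd p \<in> {a + c..b + d}"
  proof (rule AE_pair_measure)
    show "AE x in M. AE y in N. fst (x, y) + snd (x, y) \<in> {a + c..b + d}"
      using AE_M
    proof eventually_elim
      case (elim x)
      from AE_N show ?case
        by eventually_elim (use elim in \<open>auto intro: add_mono\<close>)
    qed
  next
    show "{p \<in> space (M \<Otimes>\<^sub>M N). fst p + snd p \<in> {a + c..b + d}} \<in> sets (M \<Otimes>\<^sub>M N)"
      by measurable
  qed
  then show ?thesis
    unfolding convolution_def by (subst AE_distr_iff) (auto simp: case_prod_beta)
qed

lemma integral_convolution: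
  fixes h :: "'a::ordered_euclidean_space \<Rightarrow> real"
  assumes "finite_measure M" "finite_measure N" and [measurable_cong]: "sets M = sets borel" "sets N = sets borel"
    and [measurable]: "h \<in> borel_measurable borel" and int: "integrable (convolution M N) h"
  shows "integral\<^sup>L (convolution M N) h = (\<integral>x. \<integral>y. h (x + y) \<partial>N \<partial>M)"
proof -
  interpret M: finite_measure M by fact
  interpret N: finite_measure N by fact
  interpret pair_sigma_finite M N ..
  have "integrable (M \<Otimes>\<^sub>M N) (\<lambda>p. h (fst p + snd p))"
    using int unfolding convolution_def by (subst (asm) integrable_distr_eq) (auto simp: case_prod_beta)
  then show ?thesis
    unfolding convolution_def
    by (subst integral_distr) (auto simp: case_prod_beta integral_fst'[symmetric])
qed

lemma prob_space_probI: "\<rho> \<in> probI L \<Longrightarrow> prob_space \<rho>"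
  by (simp add: probI_def)

lemma sets_probI: "\<rho> \<in> probI L \<Longrightarrow> sets \<rho> = sets borel"
  by (simp add: probI_def)

lemma AE_probI: "\<rho> \<in> probI L \<Longrightarrow> AE x in \<rho>. x \<in> {0..L}"
  using prob_space.AE_in_set_eq_1[of \<rho> "{0..L}"] by (simp add: probI_def)

lemma real_distribution_probI: "\<rho> \<in> probI L \<Longrightarrow> real_distribution \<rho>"
  by (simp add: probI_def real_distribution_def real_distribution_axioms_def)

lemma sets_conv_pow [simp, measurable_cong]: "sets (conv_pow \<rho> k) = sets borel"
  by (cases k) simp_all

lemma prob_space_conv_pow: "\<rho> \<in> probI L \<Longrightarrow> prob_space (conv_pow \<rho> k)"
  by (induction k) (simp_all add: prob_space_return prob_space_convolution prob_space_probI sets_probI)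

lemma AE_conv_pow: "\<rho> \<in> probI L \<Longrightarrow> AE s in conv_pow \<rho> k. s \<in> {0..real k * L}"
proof (induction k)
  case 0
  show ?case
    unfolding conv_pow.simps by (subst AE_return) simp_all
next
  case (Suc k)
  have "AE s in convolution \<rho> (conv_pow \<rho> k). s \<in> {0 + 0..L + real k * L}"
    by (rule AE_convolution_atLeastAtMost[OF prob_space_probI[OF Suc.prems]
      prob_space_conv_pow[OF Suc.prems] sets_probI[OF Suc.prems] sets_conv_pow
      AE_probI[OF Suc.prems] Suc.IH[OF Suc.prems]])
  then show ?case
    unfolding conv_pow.simps by (simp add: algebra_simps)
qed

definition conv_pow_integral :: "(real \<Rightarrow> real) \<Rightarrow> real measure \<Rightarrow> nat \<Rightarrow> real \<Rightarrow> real" where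
  "conv_pow_integral f \<rho> k y = (\<integral>s. f (y + s) \<partial>conv_pow \<rho> k)"

lemma conv_pow_integral_0: "f \<in> borel_measurable borel \<Longrightarrow> conv_pow_integral f \<rho> 0 y = f y"
  by (simp add: conv_pow_integral_def integral_return)

lemma conv_pow_integral_Suc:
  assumes f: "continuous_on UNIV f" and \<rho>: "\<rho> \<in> probI L"
  shows "conv_pow_integral f \<rho> (Suc k) y = (\<integral>t. conv_pow_integral f \<rho> k (y + t) \<partial>\<rho>)"
proof -
  have shift_f: "continuous_on UNIV (\<lambda>s. f (y + s))"
    by (intro continuous_on_compose2[OF f] continuous_intros) simp
  have "integrable (conv_pow \<rho> (Suc k)) (\<lambda>s. f (y + s))"
    using prob_space.finite_measure[OF prob_space_conv_pow[OF \<rho>]] sets_conv_pow AE_conv_pow[OF \<rho>]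
    by (rule integrable_continuous_AE_atLeastAtMost[OF _ _ _ shift_f])
  then have "conv_pow_integral f \<rho> (Suc k) y = (\<integral>t. \<integral>s. f (y + (t + s)) \<partial>conv_pow \<rho> k \<partial>\<rho>)"
    unfolding conv_pow_integral_def conv_pow.simps
    using \<rho> prob_space_conv_pow[OF \<rho>] shift_f
    by (intro integral_convolution)
      (simp_all add: prob_space.finite_measure prob_space_probI sets_probI borel_measurable_continuous_onI)
  then show ?thesis
    by (simp add: conv_pow_integral_def add.assoc)
qed

section \<open>Vague convergence in probI\<close>

lemma vague_conv_const: "vague_conv (\<lambda>_. \<rho>) \<rho>"
  by (simp add: vague_conv_def)

lemma vague_conv_probI_integral_tendsto:
  fixes h :: "real \<Rightarrow> real"
  assumes \<rho>s: "\<And>n. \<rho>s n \<in> probI L" and \<rho>: "\<rho> \<in> probI L" and vc: "vague_conv \<rho>s \<rho>"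
    and h: "continuous_on UNIV h"
  shows "(\<lambda>n. integral\<^sup>L (\<rho>s n) h) \<longlonglongrightarrow> integral\<^sup>L \<rho> h"
proof -
  \<comment> \<open>On measures supported in [0, L], h agrees with a compactly supported continuous cut-off.\<close>
  define cut where "cut t = max 0 (min 1 (min (t + 1) (L + 1 - t)))" for t :: real
  define \<phi> where "\<phi> t = h t * cut t" for t
  have \<phi>: "continuous_on UNIV \<phi>"
    unfolding \<phi>_def cut_def by (intro continuous_intros h)
  have "{x. \<phi> x \<noteq> 0} \<subseteq> {-1..L + 1}"
    by (auto simp: \<phi>_def cut_def max_def min_def split: if_splits)
  then have "closure {x. \<phi> x \<noteq> 0} \<subseteq> {-1..L + 1}"
    by (rule closure_minimal) simp
  then have "compact (closure {x. \<phi> x \<noteq> 0})"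
    by (meson bounded_closed_interval bounded_subset closed_closure compact_eq_bounded_closed)
  then have "(\<lambda>n. integral\<^sup>L (\<rho>s n) \<phi>) \<longlonglongrightarrow> integral\<^sup>L \<rho> \<phi>"
    using vc \<phi> unfolding vague_conv_def by blast
  moreover have "integral\<^sup>L \<nu> h = integral\<^sup>L \<nu> \<phi>" if \<nu>: "\<nu> \<in> probI L" for \<nu>
  proof (rule integral_cong_AE)
    show "h \<in> borel_measurable \<nu>" "\<phi> \<in> borel_measurable \<nu>"
      using h \<phi> by (simp_all add: measurable_cong_sets[OF sets_probI[OF \<nu>] refl] borel_measurable_continuous_onI)
    show "AE x in \<nu>. h x = \<phi> x"
      using AE_probI[OF \<nu>] by eventually_elim (auto simp: \<phi>_def cut_def)
  qed
  ultimately show ?thesis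
    using \<rho>s \<rho> by simp
qed

lemma vague_conv_probI_imp_weak_conv:
  assumes \<rho>s: "\<And>n. \<rho>s n \<in> probI L" and \<rho>: "\<rho> \<in> probI L" and vc: "vague_conv \<rho>s \<rho>"
  shows "weak_conv_m \<rho>s \<rho>"
proof (rule integral_cts_step_conv_imp_weak_conv)
  show "real_distribution (\<rho>s n)" for n
    using \<rho>s by (rule real_distribution_probI)
  show "real_distribution \<rho>"
    using \<rho> by (rule real_distribution_probI)
  fix x y :: real
  assume "x < y"
  then have "continuous_on UNIV (cts_step x y)"
    by (intro uniformly_continuous_imp_continuous cts_step_uniformly_continuous)
  with \<rho>s \<rho> vc show "(\<lambda>n. integral\<^sup>L (\<rho>s n) (cts_step x y)) \<longlonglongrightarrow> integral\<^sup>L \<rho> (cts_step x y)"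
    by (rule vague_conv_probI_integral_tendsto)
qed

text \<open>By Skorohod's theorem the measures are laws of almost surely convergent random variables,
  so this is dominated convergence.\<close>

lemma vague_conv_probI_integral_tendsto_continuous_convergence:
  fixes F :: "nat \<Rightarrow> real \<Rightarrow> real" and G :: "real \<Rightarrow> real"
  assumes \<rho>s: "\<And>n. \<rho>s n \<in> probI L" and \<rho>: "\<rho> \<in> probI L" and vc: "vague_conv \<rho>s \<rho>"
    and [measurable]: "\<And>n. F n \<in> borel_measurable borel" "G \<in> borel_measurable borel"
    and F_G: "\<And>ts t. (\<And>n. ts n \<in> {0..L}) \<Longrightarrow> t \<in> {0..L} \<Longrightarrow> ts \<longlonglongrightarrow> t \<Longrightarrow> (\<lambda>n. F n (ts n)) \<longlonglongrightarrow> G t"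
    and bound: "\<And>n y. y \<in> {0..L} \<Longrightarrow> \<bar>F n y\<bar> \<le> B"
  shows "(\<lambda>n. integral\<^sup>L (\<rho>s n) (F n)) \<longlonglongrightarrow> integral\<^sup>L \<rho> G"
proof -
  obtain \<Omega> :: "real measure" and Ys :: "nat \<Rightarrow> real \<Rightarrow> real" and Y :: "real \<Rightarrow> real" where
    \<Omega>: "prob_space \<Omega>" and [measurable]: "\<And>n. Ys n \<in> borel_measurable \<Omega>"
    and distr_Ys: "\<And>n. distr \<Omega> borel (Ys n) = \<rho>s n" and Y_lborel: "Y \<in> measurable \<Omega> lborel"
    and distr_Y: "distr \<Omega> borel Y = \<rho>" and Ys_Y: "\<And>x. x \<in> space \<Omega> \<Longrightarrow> (\<lambda>n. Ys n x) \<longlonglongrightarrow> Y x"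
    using Skorohod[OF real_distribution_probI[OF \<rho>s] real_distribution_probI[OF \<rho>]
        vague_conv_probI_imp_weak_conv[OF \<rho>s \<rho> vc]]
    by metis
  interpret prob_space \<Omega> by fact
  have [measurable]: "Y \<in> borel_measurable \<Omega>"
    using Y_lborel by simp
  have AE_Ys: "AE \<omega> in \<Omega>. Ys n \<omega> \<in> {0..L}" for n
    using AE_probI[OF \<rho>s, of n] unfolding distr_Ys[symmetric] by (subst (asm) AE_distr_iff) auto
  have AE_Y: "AE \<omega> in \<Omega>. Y \<omega> \<in> {0..L}"
    using AE_probI[OF \<rho>] unfolding distr_Y[symmetric] by (subst (asm) AE_distr_iff) auto
  have "AE \<omega> in \<Omega>. \<forall>n. Ys n \<omega> \<in> {0..L}"
    using AE_Ys by (simp add: AE_all_countable)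
  then have lim: "AE \<omega> in \<Omega>. (\<lambda>n. F n (Ys n \<omega>)) \<longlonglongrightarrow> G (Y \<omega>)"
    using AE_Y AE_space
  proof eventually_elim
    case (elim \<omega>)
    then show ?case
      using F_G[of "\<lambda>n. Ys n \<omega>" "Y \<omega>"] Ys_Y[of \<omega>] by blast
  qed
  have "(\<lambda>n. \<integral>\<omega>. F n (Ys n \<omega>) \<partial>\<Omega>) \<longlonglongrightarrow> (\<integral>\<omega>. G (Y \<omega>) \<partial>\<Omega>)"
  proof (rule integral_dominated_convergence[where w = "\<lambda>_. B"])
    show "AE \<omega> in \<Omega>. norm (F n (Ys n \<omega>)) \<le> B" for n
      using AE_Ys[of n] by eventually_elim (simp add: bound)
  qed (use lim in simp_all)
  moreover have "integral\<^sup>L (\<rho>s n) (F n) = (\<integral>\<omega>. F n (Ys n \<omega>) \<partial>\<Omega>)" for n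
    unfolding distr_Ys[symmetric] by (rule integral_distr) simp_all
  moreover have "integral\<^sup>L \<rho> G = (\<integral>\<omega>. G (Y \<omega>) \<partial>\<Omega>)"
    unfolding distr_Y[symmetric] by (rule integral_distr) simp_all
  ultimately show ?thesis
    by simp
qed

section \<open>Continuity of the means\<close>

locale cosh_bounded =
  fixes f :: "real \<Rightarrow> real" and a b :: real
  assumes continuous_f: "continuous_on UNIV f"
    and abs_f_le_cosh: "\<And>x. \<bar>f x\<bar> \<le> a * cosh (b * x)"
begin

lemma borel_measurable_f [measurable]: "f \<in> borel_measurable borel"
  using continuous_f by (rule borel_measurable_continuous_onI)

lemma a_nonneg: "0 \<le> a"
  using abs_f_le_cosh[of 0] by simp

lemma abs_f_le:
  assumes "\<bar>z\<bar> \<le> Y + real k * L"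
  shows "\<bar>f z\<bar> \<le> a * exp (\<bar>b\<bar> * Y) * exp (\<bar>b\<bar> * L) ^ k"
proof -
  have "\<bar>b\<bar> * \<bar>z\<bar> \<le> \<bar>b\<bar> * (Y + real k * L)"
    using assms by (rule mult_left_mono) simp
  then have "exp \<bar>b * z\<bar> \<le> exp (\<bar>b\<bar> * Y) * exp (\<bar>b\<bar> * L) ^ k"
    by (simp add: abs_mult algebra_simps flip: exp_add exp_of_nat_mult)
  then have "a * cosh (b * z) \<le> a * exp (\<bar>b\<bar> * Y) * exp (\<bar>b\<bar> * L) ^ k"
    using a_nonneg cosh_le_exp_abs[of "b * z"] by (simp add: mult.assoc mult_left_mono)
  then show ?thesis
    using abs_f_le_cosh[of z] by linarith
qed

lemma abs_conv_pow_integral_le: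
  assumes \<rho>: "\<rho> \<in> probI L" and "\<bar>y\<bar> \<le> Y"
  shows "\<bar>conv_pow_integral f \<rho> k y\<bar> \<le> a * exp (\<bar>b\<bar> * Y) * exp (\<bar>b\<bar> * L) ^ k"
  unfolding conv_pow_integral_def
proof (rule prob_space.abs_integral_le_AE_bound[OF prob_space_conv_pow[OF \<rho>]])
  show "AE s in conv_pow \<rho> k. \<bar>f (y + s)\<bar> \<le> a * exp (\<bar>b\<bar> * Y) * exp (\<bar>b\<bar> * L) ^ k"
    using AE_conv_pow[OF \<rho>, of k] by eventually_elim (rule abs_f_le, use assms(2) in auto)
qed

lemma tendsto_conv_pow_integral:
  assumes "\<And>n. \<rho>s n \<in> probI L" and "\<rho> \<in> probI L" and "vague_conv \<rho>s \<rho>" and "xs \<longlonglongrightarrow> x"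
  shows "(\<lambda>n. conv_pow_integral f (\<rho>s n) k (xs n)) \<longlonglongrightarrow> conv_pow_integral f \<rho> k x"
  using assms
proof (induction k arbitrary: \<rho>s \<rho> xs x)
  case 0
  then show ?case
    using continuous_on_tendsto_compose[OF continuous_f] by (simp add: conv_pow_integral_0)
next
  case (Suc k)
  \<comment> \<open>The induction hypothesis for constant sequences of measures yields continuity in x.\<close>
  have continuous: "continuous_on UNIV (conv_pow_integral f \<nu> k)" if "\<nu> \<in> probI L" for \<nu>
    using Suc.IH[of "\<lambda>_. \<nu>" \<nu>] that vague_conv_const by (intro continuous_on_sequentiallyI) simp
  have shifted_measurable: "(\<lambda>t. conv_pow_integral f \<nu> k (y + t)) \<in> borel_measurable borel"
    if "\<nu> \<in> probI L" for \<nu> y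
    by (intro borel_measurable_continuous_onI continuous_on_compose2[OF continuous[OF that]]
        continuous_intros) simp
  obtain X where X: "\<And>n. \<bar>xs n\<bar> \<le> X"
    using convergent_imp_Bseq[OF convergentI[OF Suc.prems(4)]] by (auto simp: Bseq_def)
  have "(\<lambda>n. \<integral>t. conv_pow_integral f (\<rho>s n) k (xs n + t) \<partial>\<rho>s n)
      \<longlonglongrightarrow> (\<integral>t. conv_pow_integral f \<rho> k (x + t) \<partial>\<rho>)"
  proof (rule vague_conv_probI_integral_tendsto_continuous_convergence[OF Suc.prems(1-3)])
    show "(\<lambda>n. conv_pow_integral f (\<rho>s n) k (xs n + ts n)) \<longlonglongrightarrow> conv_pow_integral f \<rho> k (x + t)"
      if "ts \<longlonglongrightarrow> t" for ts t
      using Suc.IH[OF Suc.prems(1-3) tendsto_add[OF Suc.prems(4) that]] .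
    show "\<bar>conv_pow_integral f (\<rho>s n) k (xs n + t)\<bar> \<le> a * exp (\<bar>b\<bar> * (X + L)) * exp (\<bar>b\<bar> * L) ^ k"
      if "t \<in> {0..L}" for n t
      using X[of n] that by (intro abs_conv_pow_integral_le[OF Suc.prems(1)]) auto
  qed (use shifted_measurable Suc.prems(1,2) in auto)
  then show ?case
    by (simp add: conv_pow_integral_Suc[OF continuous_f Suc.prems(1)]
        conv_pow_integral_Suc[OF continuous_f Suc.prems(2)])
qed

lemma continuous_conv_pow_integral: "\<rho> \<in> probI L \<Longrightarrow> continuous_on UNIV (conv_pow_integral f \<rho> k)"
  using tendsto_conv_pow_integral[of "\<lambda>_. \<rho>" L \<rho>] vague_conv_const
  by (intro continuous_on_sequentiallyI) simp

lemma mean_sigma_x: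
  assumes lam: "0 \<le> lam" and \<rho>: "\<rho> \<in> probI L"
  shows "mean (sigma_x f lam \<rho> x) = (\<Sum>k. poisson_w lam k / real (Suc k) * conv_pow_integral f \<rho> k x)"
proof -
  define \<nu> where "\<nu> n = convolution (return borel x) (conv_pow \<rho> n)" for n
  have return: "prob_space (return borel x)" "sets (return borel x) = sets borel"
      "AE y in return borel x. y \<in> {x..x}"
    by (simp_all add: prob_space_return AE_return)
  have prob_\<nu>: "prob_space (\<nu> n)" for n
    unfolding \<nu>_def
    by (rule prob_space_convolution[OF return(1) prob_space_conv_pow[OF \<rho>] return(2) sets_conv_pow])
  have AE_\<nu>: "AE y in \<nu> n. y \<in> {x + 0..x + real n * L}" for n
    unfolding \<nu>_def
    by (rule AE_convolution_atLeastAtMost[OF return(1) prob_space_conv_pow[OF \<rho>] return(2) sets_conv_pow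
          return(3) AE_conv_pow[OF \<rho>]])
  have bound: "AE y in \<nu> n. \<bar>f y\<bar> \<le> a * exp (\<bar>b\<bar> * \<bar>x\<bar>) * exp (\<bar>b\<bar> * L) ^ n" for n
    using AE_\<nu>[of n]
  proof eventually_elim
    case (elim y)
    then have "\<bar>y\<bar> \<le> \<bar>x\<bar> + real n * L"
      by (auto simp: abs_le_iff)
    then show ?case
      by (rule abs_f_le)
  qed
  have integral_\<nu>: "(\<integral>y. f y \<partial>\<nu> n) = conv_pow_integral f \<rho> n x" for n
  proof -
    have "integrable (\<nu> n) f"
      using prob_space.finite_measure[OF prob_\<nu>] _ AE_\<nu> continuous_f
      by (rule integrable_continuous_AE_atLeastAtMost) (simp add: \<nu>_def)
    then have "(\<integral>y. f y \<partial>\<nu> n) = (\<integral>t. conv_pow_integral f \<rho> n t \<partial>return borel x)"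
      unfolding \<nu>_def conv_pow_integral_def
      by (intro integral_convolution)
        (simp_all add: prob_space.finite_measure return prob_space_conv_pow[OF \<rho>])
    also have "\<dots> = conv_pow_integral f \<rho> n x"
      using continuous_conv_pow_integral[OF \<rho>]
      by (intro integral_return) (simp_all add: borel_measurable_continuous_onI)
    finally show ?thesis .
  qed
  have "mean (sigma_x f lam \<rho> x) = (\<Sum>n. poisson_w lam n / real (Suc n) * (\<integral>y. f y \<partial>\<nu> n))"
    unfolding sigma_x_def \<nu>_def[symmetric]
    using lam prob_\<nu> _ borel_measurable_f bound summable_poisson_w_power
    by (rule mean_mix_measure) (simp add: \<nu>_def)
  then show ?thesis
    by (simp add: integral_\<nu>)
qed

lemma mean_sigma:
  assumes lam: "0 \<le> lam" and \<rho>: "\<rho> \<in> probI L"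
  shows "mean (sigma f lam \<rho>) = (\<Sum>k. poisson_w lam k / real (Suc k) * conv_pow_integral f \<rho> (Suc k) 0)"
proof -
  have bound: "AE y in conv_pow \<rho> (Suc n). \<bar>f y\<bar> \<le> a * exp (\<bar>b\<bar> * L) * exp (\<bar>b\<bar> * L) ^ n" for n
    using AE_conv_pow[OF \<rho>, of "Suc n"]
  proof eventually_elim
    case (elim y)
    then have "\<bar>y\<bar> \<le> 0 + real (Suc n) * L"
      by simp
    then have "\<bar>f y\<bar> \<le> a * exp (\<bar>b\<bar> * 0) * exp (\<bar>b\<bar> * L) ^ Suc n"
      by (rule abs_f_le)
    then show ?case
      by (simp add: mult.assoc)
  qed
  have "mean (sigma f lam \<rho>) = (\<Sum>n. poisson_w lam n / real (Suc n) * (\<integral>y. f y \<partial>conv_pow \<rho> (Suc n)))"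
    unfolding sigma_def
    using lam prob_space_conv_pow[OF \<rho>] sets_conv_pow borel_measurable_f bound summable_poisson_w_power
    by (rule mean_mix_measure)
  then show ?thesis
    by (simp add: conv_pow_integral_def)
qed

lemma tendsto_mean_sigma_x:
  assumes lam: "0 \<le> lam" and \<rho>s: "\<And>n. \<rho>s n \<in> probI L" and \<rho>: "\<rho> \<in> probI L"
    and vc: "vague_conv \<rho>s \<rho>" and xs: "xs \<longlonglongrightarrow> x"
  shows "(\<lambda>n. mean (sigma_x f lam (\<rho>s n) (xs n))) \<longlonglongrightarrow> mean (sigma_x f lam \<rho> x)"
proof -
  obtain X where X: "\<And>n. \<bar>xs n\<bar> \<le> X"
    using convergent_imp_Bseq[OF convergentI[OF xs]] by (auto simp: Bseq_def)
  have "(\<lambda>n. \<Sum>k. poisson_w lam k / real (Suc k) * conv_pow_integral f (\<rho>s n) k (xs n))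
      \<longlonglongrightarrow> (\<Sum>k. poisson_w lam k / real (Suc k) * conv_pow_integral f \<rho> k x)"
  proof (rule tendsto_suminf_dominated)
    show "(\<lambda>n. poisson_w lam k / real (Suc k) * conv_pow_integral f (\<rho>s n) k (xs n))
        \<longlonglongrightarrow> poisson_w lam k / real (Suc k) * conv_pow_integral f \<rho> k x" for k
      by (intro tendsto_mult_left tendsto_conv_pow_integral[OF \<rho>s \<rho> vc xs])
    show "\<bar>poisson_w lam k / real (Suc k) * conv_pow_integral f (\<rho>s n) k (xs n)\<bar>
        \<le> poisson_w lam k * (a * exp (\<bar>b\<bar> * X) * exp (\<bar>b\<bar> * L) ^ k)" for k n
      by (intro abs_poisson_w_divide_mult_le lam abs_conv_pow_integral_le[OF \<rho>s X])
  qed (rule summable_poisson_w_power)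
  then show ?thesis
    by (simp add: mean_sigma_x[OF lam \<rho>s] mean_sigma_x[OF lam \<rho>])
qed

lemma tendsto_mean_sigma:
  assumes lam: "0 \<le> lam" and \<rho>s: "\<And>n. \<rho>s n \<in> probI L" and \<rho>: "\<rho> \<in> probI L"
    and vc: "vague_conv \<rho>s \<rho>"
  shows "(\<lambda>n. mean (sigma f lam (\<rho>s n))) \<longlonglongrightarrow> mean (sigma f lam \<rho>)"
proof -
  have "(\<lambda>n. \<Sum>k. poisson_w lam k / real (Suc k) * conv_pow_integral f (\<rho>s n) (Suc k) 0)
      \<longlonglongrightarrow> (\<Sum>k. poisson_w lam k / real (Suc k) * conv_pow_integral f \<rho> (Suc k) 0)"
  proof (rule tendsto_suminf_dominated)
    show "(\<lambda>n. poisson_w lam k / real (Suc k) * conv_pow_integral f (\<rho>s n) (Suc k) 0)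
        \<longlonglongrightarrow> poisson_w lam k / real (Suc k) * conv_pow_integral f \<rho> (Suc k) 0" for k
      by (intro tendsto_mult_left tendsto_conv_pow_integral[OF \<rho>s \<rho> vc tendsto_const])
    show "\<bar>poisson_w lam k / real (Suc k) * conv_pow_integral f (\<rho>s n) (Suc k) 0\<bar>
        \<le> poisson_w lam k * (a * exp (\<bar>b\<bar> * L) * exp (\<bar>b\<bar> * L) ^ k)" for k n
    proof (rule abs_poisson_w_divide_mult_le[OF lam])
      have "\<bar>conv_pow_integral f (\<rho>s n) (Suc k) 0\<bar> \<le> a * exp (\<bar>b\<bar> * 0) * exp (\<bar>b\<bar> * L) ^ Suc k"
        by (rule abs_conv_pow_integral_le[OF \<rho>s]) simp
      then show "\<bar>conv_pow_integral f (\<rho>s n) (Suc k) 0\<bar> \<le> a * exp (\<bar>b\<bar> * L) * exp (\<bar>b\<bar> * L) ^ k"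
        by (simp add: mult.assoc)
    qed
  qed (rule summable_poisson_w_power)
  then show ?thesis
    by (simp add: mean_sigma[OF lam \<rho>s] mean_sigma[OF lam \<rho>])
qed

lemma continuous_mean_sigma_x:
  "0 \<le> lam \<Longrightarrow> \<rho> \<in> probI L \<Longrightarrow> continuous_on UNIV (\<lambda>x. mean (sigma_x f lam \<rho> x))"
  using tendsto_mean_sigma_x[of lam "\<lambda>_. \<rho>" L \<rho>] vague_conv_const
  by (intro continuous_on_sequentiallyI) simp

lemma abs_mean_sigma_x_le:
  assumes lam: "0 \<le> lam" and \<rho>: "\<rho> \<in> probI L" and y: "y \<in> {0..L}"
  shows "\<bar>mean (sigma_x f lam \<rho> y)\<bar> \<le> (\<Sum>k. poisson_w lam k * (a * exp (\<bar>b\<bar> * L) * exp (\<bar>b\<bar> * L) ^ k))"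
proof -
  have "\<bar>poisson_w lam k / real (Suc k) * conv_pow_integral f \<rho> k y\<bar>
      \<le> poisson_w lam k * (a * exp (\<bar>b\<bar> * L) * exp (\<bar>b\<bar> * L) ^ k)" for k
    using y by (intro abs_poisson_w_divide_mult_le lam abs_conv_pow_integral_le[OF \<rho>]) auto
  then have "norm (\<Sum>k. poisson_w lam k / real (Suc k) * conv_pow_integral f \<rho> k y)
      \<le> (\<Sum>k. poisson_w lam k * (a * exp (\<bar>b\<bar> * L) * exp (\<bar>b\<bar> * L) ^ k))"
    by (intro norm_suminf_le summable_poisson_w_power) simp
  then show ?thesis
    by (simp add: mean_sigma_x[OF lam \<rho>])
qed

lemma vague_conv_dens_A_density:
  assumes lam: "0 \<le> lam" and \<rho>s: "\<And>n. \<rho>s n \<in> probI L" and \<rho>: "\<rho> \<in> probI L"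
    and vc: "vague_conv \<rho>s \<rho>" and nonzero: "mean (sigma f lam \<rho>) \<noteq> 0"
  shows "vague_conv_dens \<rho>s (\<lambda>n. A_density f lam (\<rho>s n)) \<rho> (A_density f lam \<rho>)"
  unfolding vague_conv_dens_def
proof (intro allI impI)
  fix \<phi> :: "real \<Rightarrow> real"
  assume "continuous_on UNIV \<phi> \<and> compact (closure {x. \<phi> x \<noteq> 0})"
  then have \<phi>: "continuous_on UNIV \<phi>"
    by blast
  obtain K\<phi> where K\<phi>: "\<And>y. y \<in> {0..L} \<Longrightarrow> \<bar>\<phi> y\<bar> \<le> K\<phi>"
    using continuous_on_abs_bounded_atLeastAtMost[OF continuous_on_subset[OF \<phi> subset_UNIV]] by blast
  define K where "K = (\<Sum>k. poisson_w lam k * (a * exp (\<bar>b\<bar> * L) * exp (\<bar>b\<bar> * L) ^ k))"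
  have measurable: "(\<lambda>x. \<phi> x * mean (sigma_x f lam \<nu> x)) \<in> borel_measurable borel" if "\<nu> \<in> probI L" for \<nu>
    by (intro borel_measurable_continuous_onI continuous_intros \<phi> continuous_mean_sigma_x[OF lam that])
  have "(\<lambda>n. \<integral>x. \<phi> x * mean (sigma_x f lam (\<rho>s n) x) \<partial>\<rho>s n)
      \<longlonglongrightarrow> (\<integral>x. \<phi> x * mean (sigma_x f lam \<rho> x) \<partial>\<rho>)"
  proof (rule vague_conv_probI_integral_tendsto_continuous_convergence[OF \<rho>s \<rho> vc measurable[OF \<rho>s]
        measurable[OF \<rho>], where B = "K\<phi> * K"])
    show "(\<lambda>n. \<phi> (ts n) * mean (sigma_x f lam (\<rho>s n) (ts n))) \<longlonglongrightarrow> \<phi> t * mean (sigma_x f lam \<rho> t)"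
      if "ts \<longlonglongrightarrow> t" for ts t
      using continuous_on_tendsto_compose[OF \<phi> that] tendsto_mean_sigma_x[OF lam \<rho>s \<rho> vc that]
      by (intro tendsto_mult) simp_all
    show "\<bar>\<phi> y * mean (sigma_x f lam (\<rho>s n) y)\<bar> \<le> K\<phi> * K" if "y \<in> {0..L}" for n y
      unfolding abs_mult K_def
      using K\<phi>[OF that] abs_mean_sigma_x_le[OF lam \<rho>s that]
      by (intro mult_mono) auto
  qed
  from this tendsto_mean_sigma[OF lam \<rho>s \<rho> vc] nonzero
  have "(\<lambda>n. (\<integral>x. \<phi> x * mean (sigma_x f lam (\<rho>s n) x) \<partial>\<rho>s n) / mean (sigma f lam (\<rho>s n)))
      \<longlonglongrightarrow> (\<integral>x. \<phi> x * mean (sigma_x f lam \<rho> x) \<partial>\<rho>) / mean (sigma f lam \<rho>)"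
    by (rule tendsto_divide)
  then show "(\<lambda>n. \<integral>x. \<phi> x * A_density f lam (\<rho>s n) x \<partial>\<rho>s n) \<longlonglongrightarrow> (\<integral>x. \<phi> x * A_density f lam \<rho> x \<partial>\<rho>)"
    by (simp add: A_density_def times_divide_eq_right integral_divide_zero)
qed

end

theorem theorem5:
  fixes f :: "real \<Rightarrow> real" and a b lam L :: real
  assumes "continuous_on UNIV f"
    and "a > 0"
    and "\<And>x. \<bar>f x\<bar> \<le> a * cosh (b * x)"
    and "lam > 0"
    and "L > 0"
  shows "\<forall>\<rho>s \<rho>. (\<forall>n. \<rho>s n \<in> probI L - N_set f lam L) \<and> \<rho> \<in> probI L - N_set f lam L
            \<and> vague_conv \<rho>s \<rho> \<longrightarrow>
          vague_conv_dens \<rho>s (\<lambda>n. A_density f lam (\<rho>s n)) \<rho> (A_density f lam \<rho>)"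
proof (intro allI impI)
  interpret cosh_bounded f a b
    using assms(1,3) by unfold_locales
  fix \<rho>s \<rho>
  assume "(\<forall>n. \<rho>s n \<in> probI L - N_set f lam L) \<and> \<rho> \<in> probI L - N_set f lam L \<and> vague_conv \<rho>s \<rho>"
  then have "\<And>n. \<rho>s n \<in> probI L" "\<rho> \<in> probI L" "vague_conv \<rho>s \<rho>" "mean (sigma f lam \<rho>) \<noteq> 0"
    by (auto simp: N_set_def)
  then show "vague_conv_dens \<rho>s (\<lambda>n. A_density f lam (\<rho>s n)) \<rho> (A_density f lam \<rho>)"
    using assms(4) by (intro vague_conv_dens_A_density) simp_all
qed

end
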